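(* Let $\mathcal M=(\mathbf M^{(\lambda)})_{\lambda>0}$, $\mathbf M^{(\lambda)}=(M^{(\lambda)}_p)_{p\in\mathbb N_0}$, be a weight matrix in dimension $d=1$ such that for every $\lambda>0$: $(M^{(\lambda)}_p)^2\le M^{(\lambda)}_{p-1}M^{(\lambda)}_{p+1}$ for all $p\in\mathbb N$ and $\lim_{p\to\infty}(M^{(\lambda)}_p)^{1/p}=+\infty$. Assume moreover that $\mu^{(\lambda)}_p:=M^{(\lambda)}_p/M^{(\lambda)}_{p-1}$ ($p\in\mathbb N$), $\mu^{(\lambda)}_0:=1$, satisfy $\mu^{(\lambda)}_p\le\mu^{(\kappa)}_p$ for all $p$ whenever $0<\lambda\le\kappa$. Then the following are equivalent: (a) for every $j\in\mathbb N$ there exists $\ell\in\mathbb N$, $\ell>j$, such that $\sum_{k=1}^{\infty}e^{\omega_{\mathbf M^{(1/j)}}(jk^{1/2})-\omega_{\mathbf M^{(1/\ell)}}(\ell k^{1/2})}<+\infty$; (b) for every $\lambda>0$ there exist $0<\kappa<\lambda$ and $A\ge1$ such that $M^{(\kappa)}_{p+1}\le A^{p+1}M^{(\lambda)}_p$ for all $p\in\mathbb N$.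
   Context: A weight matrix (here $d=1$) is a family $(\mathbf M^{(\lambda)})_{\lambda>0}$ of sequences of positive reals $(M^{(\lambda)}_p)_{p\in\mathbb N_0}$ with $M^{(\lambda)}_0=1$ and $M^{(\lambda)}_p\le M^{(\kappa)}_p$ for all $p$ whenever $0<\lambda\le\kappa$. The associated function of $\mathbf M=(M_p)$ is $\omega_{\mathbf M}(t)=\sup_{p\in\mathbb N_0}\log\frac{|t|^p}{M_p}$ (with $0^0=1$). *)

theory Defs
  imports "HOL-Analysis.Analysis"
begin

definition weight_matrix :: "(real \<Rightarrow> nat \<Rightarrow> real) \<Rightarrow> bool" where
  "weight_matrix M \<longleftrightarrow>
     (\<forall>la>0. M la 0 = 1 \<and> (\<forall>p. M la p > 0)) \<and>
     (\<forall>la ka. 0 < la \<and> la \<le> ka \<longrightarrow> (\<forall>p. M la p \<le> M ka p))"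

text \<open>Associated function omega_M(t) = sup_p log(|t|^p / M_p), with 0^0 = 1 (so omega_M(0) = 0).\<close>
definition assoc_fun :: "(nat \<Rightarrow> real) \<Rightarrow> real \<Rightarrow> real" where
  "assoc_fun M t = (if t = 0 then 0 else (SUP p. ln (\<bar>t\<bar> ^ p / M p)))"

definition quot_seq :: "(nat \<Rightarrow> real) \<Rightarrow> nat \<Rightarrow> real" where
  "quot_seq M p = (if p = 0 then 1 else M p / M (p - 1))"

end

(*
  Write omega_la for the associated function of M^(la).

  (b) implies (a): iterating (b) three times gives M^(ka)_(p+3) <= A^(p+3) M^(la)_p, which
  says omega_la(t) + 3 log t <= omega_ka(A t).  Evaluated at t = j sqrt k this bounds the
  summands of (a) by k^(-3/2).

  (a) implies (b): associated functions are increasing, so the n summands with index between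
  n and 2n are all at least exp(omega_(1/j)(j sqrt n) - omega_(1/l)(l sqrt(2n))); summability
  therefore gives omega_(1/j)(s) + 2 log s <= omega_(1/l)(H s) + C with H = 2 l / j.  For a
  log-convex sequence the supremum defining omega at t = mu_q is attained at the index q, and
  this inverts the estimate into M^(1/l)_(p+1) <= e^C H^(p+1) M^(1/j)_p.
*)

theory Submission
  imports Defs
begin

section \<open>Log-convex sequences\<close>

lemma quot_seq_mono_log_convex:
  fixes N :: "nat \<Rightarrow> real"
  assumes pos: "\<And>p. N p > 0"
    and log_convex: "\<And>p. p \<ge> 1 \<Longrightarrow> (N p)\<^sup>2 \<le> N (p - 1) * N (p + 1)"
    and "1 \<le> a" "a \<le> b"
  shows "quot_seq N a \<le> quot_seq N b"
  using \<open>a \<le> b\<close>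
proof (induction b rule: dec_induct)
  case (step n)
  have "n \<ge> 1" using \<open>1 \<le> a\<close> step by auto
  then have "N n / N (n - 1) \<le> N (n + 1) / N n"
    using log_convex[of n] pos[of n] pos[of "n - 1"]
    by (simp add: divide_simps power2_eq_square mult.commute)
  with step \<open>n \<ge> 1\<close> show ?case by (simp add: quot_seq_def)
qed simp

lemma power_div_le_at_quot_seq:
  fixes N :: "nat \<Rightarrow> real"
  assumes pos: "\<And>p. N p > 0"
    and log_convex: "\<And>p. p \<ge> 1 \<Longrightarrow> (N p)\<^sup>2 \<le> N (p - 1) * N (p + 1)"
    and q: "q \<ge> 1"
  shows "quot_seq N q ^ p / N p \<le> quot_seq N q ^ q / N q"
proof -
  define t where "t = quot_seq N q"
  have t: "t > 0" using pos q by (simp add: t_def quot_seq_def)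
  have step_iff: "t ^ n / N n \<le> t ^ (n + 1) / N (n + 1) \<longleftrightarrow> quot_seq N (n + 1) \<le> t" for n
    using pos[of n] pos[of "n + 1"] t by (simp add: quot_seq_def divide_simps mult.commute)
  have "t ^ p / N p \<le> t ^ q / N q"
  proof (cases "p \<le> q")
    case True
    then show ?thesis
    proof (induction p rule: inc_induct)
      case (step n)
      have "quot_seq N (n + 1) \<le> t"
        unfolding t_def using step by (intro quot_seq_mono_log_convex[OF pos log_convex]) auto
      with step.IH step_iff[of n] show ?case by simp
    qed simp
  next
    case False
    then have "q \<le> p" by simp
    then show ?thesis
    proof (induction p rule: dec_induct)
      case (step n)
      have "t \<le> quot_seq N (n + 1)"
        unfolding t_def using step q by (intro quot_seq_mono_log_convex[OF pos log_convex]) auto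
      then have "t ^ (n + 1) / N (n + 1) \<le> t ^ n / N n"
        using pos[of n] pos[of "n + 1"] t by (simp add: quot_seq_def divide_simps mult.commute)
      with step.IH show ?case by simp
    qed simp
  qed
  then show ?thesis unfolding t_def .
qed

section \<open>Summability along square roots\<close>

lemma sqrt_block_le_suminf:
  fixes f g :: "real \<Rightarrow> real"
  assumes f: "mono_on {0<..} f" and g: "mono_on {0<..} g" and a: "a > 0" and b: "b > 0"
    and summable: "summable (\<lambda>k. exp (f (a * sqrt (real (k + 1))) - g (b * sqrt (real (k + 1)))))"
    and n: "n \<ge> 1"
  shows "real n * exp (f (a * sqrt (real n)) - g (b * sqrt (2 * real n)))
           \<le> (\<Sum>k. exp (f (a * sqrt (real (k + 1))) - g (b * sqrt (real (k + 1)))))"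
proof -
  let ?u = "\<lambda>k. exp (f (a * sqrt (real (k + 1))) - g (b * sqrt (real (k + 1))))"
  let ?e = "exp (f (a * sqrt (real n)) - g (b * sqrt (2 * real n)))"
  have "?e \<le> ?u k" if "k \<in> {n - 1..<2 * n - 1}" for k
  proof -
    have k: "real n \<le> real (k + 1)" "real (k + 1) \<le> 2 * real n" using that n by auto
    have "f (a * sqrt (real n)) \<le> f (a * sqrt (real (k + 1)))"
      using k n a by (intro mono_onD[OF f]) auto
    moreover have "g (b * sqrt (real (k + 1))) \<le> g (b * sqrt (2 * real n))"
      using k b by (intro mono_onD[OF g]) auto
    ultimately show ?thesis by simp
  qed
  then have "(\<Sum>k\<in>{n - 1..<2 * n - 1}. ?e) \<le> (\<Sum>k\<in>{n - 1..<2 * n - 1}. ?u k)"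
    by (rule sum_mono)
  also have "\<dots> \<le> (\<Sum>k. ?u k)" using summable by (intro sum_le_suminf) auto
  finally show ?thesis using n by simp
qed

lemma log_bound_of_summable_exp_diff:
  fixes f g :: "real \<Rightarrow> real"
  assumes f: "mono_on {0<..} f" and g: "mono_on {0<..} g" and a: "a > 0" and b: "b > 0"
    and summable: "summable (\<lambda>k. exp (f (a * sqrt (real (k + 1))) - g (b * sqrt (real (k + 1)))))"
  shows "\<exists>C. \<forall>s\<ge>a. f s + 2 * ln s \<le> g (2 * b / a * s) + C"
proof -
  define S where "S = (\<Sum>k. exp (f (a * sqrt (real (k + 1))) - g (b * sqrt (real (k + 1)))))"
  have "f s + 2 * ln s \<le> g (2 * b / a * s) + (ln S + 2 * ln a)" if s: "s \<ge> a" for s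
  proof -
    define r where "r = s / a"
    have r: "r \<ge> 1" using s a by (simp add: r_def)
    define m where "m = nat \<lceil>r\<^sup>2\<rceil>"
    have r2: "r\<^sup>2 \<ge> 1" using r by (simp add: one_le_power)
    then have "real m = of_int \<lceil>r\<^sup>2\<rceil>" by (simp add: m_def)
    then have m: "r\<^sup>2 \<le> real m" "real m \<le> 2 * r\<^sup>2" and "m \<ge> 1"
      using r2 by linarith+
    have s_le: "s \<le> a * sqrt (real m)"
      using real_le_rsqrt[OF m(1)] a by (simp add: r_def field_simps)
    have le_s: "b * sqrt (2 * real m) \<le> 2 * b / a * s"
    proof -
      have "sqrt (2 * real m) \<le> sqrt ((2 * r)\<^sup>2)"
        using m by (intro real_sqrt_le_mono) (simp add: power2_eq_square)
      also have "\<dots> = 2 * r" using r by (intro real_sqrt_unique) auto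
      finally show ?thesis using a b by (simp add: r_def field_simps)
    qed
    have "ln (real m * exp (f (a * sqrt (real m)) - g (b * sqrt (2 * real m)))) \<le> ln S"
      using sqrt_block_le_suminf[OF f g a b summable \<open>m \<ge> 1\<close>] \<open>m \<ge> 1\<close> unfolding S_def
      by (intro ln_mono) auto
    then have "ln (real m) + f (a * sqrt (real m)) - g (b * sqrt (2 * real m)) \<le> ln S"
      using \<open>m \<ge> 1\<close> by (simp add: ln_mult)
    moreover have "f s \<le> f (a * sqrt (real m))"
      using s_le s a by (intro mono_onD[OF f]) auto
    moreover have "g (b * sqrt (2 * real m)) \<le> g (2 * b / a * s)"
      using le_s \<open>m \<ge> 1\<close> a b s by (intro mono_onD[OF g]) auto
    moreover have "2 * ln s - 2 * ln a \<le> ln (real m)"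
    proof -
      have "2 * ln s - 2 * ln a = ln (r\<^sup>2)" using s a by (simp add: r_def ln_div ln_realpow)
      also have "\<dots> \<le> ln (real m)" using m r2 by (intro ln_mono) auto
      finally show ?thesis .
    qed
    ultimately show ?thesis by linarith
  qed
  then show ?thesis by blast
qed

lemma add_ln_bound_on_positives:
  fixes f g :: "real \<Rightarrow> real"
  assumes f: "mono_on {0<..} f" and g: "\<And>s. s > 0 \<Longrightarrow> g s \<ge> 0" and a: "a \<ge> 1" and H: "H > 0"
    and bound: "\<And>s. s \<ge> a \<Longrightarrow> f s + 2 * ln s \<le> g (H * s) + C"
  shows "\<exists>C'. \<forall>s>0. f s + ln s \<le> g (H * s) + C'"
proof -
  have "f s + ln s \<le> g (H * s) + max C (f a + ln a)" if s: "s > 0" for s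
  proof (cases "s \<ge> a")
    case True
    then have "ln s \<ge> 0" using a by simp
    with bound[OF True] show ?thesis by linarith
  next
    case False
    then have "f s \<le> f a" "ln s \<le> ln a" using s by (auto intro: mono_onD[OF f])
    moreover have "g (H * s) \<ge> 0" using s H by (intro g) simp
    ultimately show ?thesis by linarith
  qed
  then show ?thesis by blast
qed

section \<open>The associated function of a weight sequence\<close>

lemma assoc_fun_le:
  assumes "t > 0" and "\<And>p. ln (t ^ p / N p) \<le> c"
  shows "assoc_fun N t \<le> c"
  using assms unfolding assoc_fun_def by (auto intro: cSUP_least)

locale weight_sequence =
  fixes N :: "nat \<Rightarrow> real"
  assumes pos: "N p > 0"
    and zero: "N 0 = 1"
    and root_tendsto: "filterlim (\<lambda>p. N p powr (1 / real p)) at_top sequentially"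
begin

lemma bdd_above_ln_power_div:
  assumes t: "t > 0"
  shows "bdd_above (range (\<lambda>p. ln (t ^ p / N p)))"
proof -
  obtain P where P: "\<And>p. p \<ge> P \<Longrightarrow> N p powr (1 / real p) \<ge> t \<and> p \<ge> 1"
    using eventually_conj[OF root_tendsto[unfolded filterlim_at_top, rule_format, of t]
        eventually_ge_at_top[of 1]]
    unfolding eventually_sequentially by blast
  have "ln (t ^ p / N p) \<le> 0" if "p \<ge> P" for p
  proof -
    have "t ^ p \<le> (N p powr (1 / real p)) ^ p"
      using P[OF that] t by (intro power_mono) auto
    also have "\<dots> = N p"
      using P[OF that] pos[of p] by (simp add: powr_realpow[symmetric] powr_powr)
    finally show ?thesis using pos[of p] t by (simp add: ln_le_zero_iff)
  qed
  then have "ln (t ^ p / N p) \<le> max (Max ((\<lambda>p. ln (t ^ p / N p)) ` {..P})) 0" for p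
    by (cases "p \<le> P") (auto simp: le_max_iff_disj)
  then show ?thesis by (intro bdd_aboveI2)
qed

lemma ln_power_div_le_assoc_fun: "t > 0 \<Longrightarrow> ln (t ^ p / N p) \<le> assoc_fun N t"
  unfolding assoc_fun_def by (auto intro: cSUP_upper bdd_above_ln_power_div)

lemma assoc_fun_nonneg: "t > 0 \<Longrightarrow> 0 \<le> assoc_fun N t"
  using ln_power_div_le_assoc_fun[of t 0] by (simp add: zero)

lemma assoc_fun_mono: "mono_on {0<..} (assoc_fun N)"
proof (rule mono_onI)
  fix s t :: real
  assume "s \<in> {0<..}" "s \<le> t"
  then have s: "0 < s" "s \<le> t" by auto
  have "ln (s ^ p / N p) \<le> assoc_fun N t" for p
  proof -
    have "ln (s ^ p / N p) \<le> ln (t ^ p / N p)"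
      using s pos[of p] by (simp add: divide_right_mono power_mono)
    also have "\<dots> \<le> assoc_fun N t" using s by (intro ln_power_div_le_assoc_fun) auto
    finally show ?thesis .
  qed
  with s show "assoc_fun N s \<le> assoc_fun N t" by (intro assoc_fun_le) auto
qed

lemma assoc_fun_antimono:
  assumes le: "\<And>p. N p \<le> L p" and t: "t > 0"
  shows "assoc_fun L t \<le> assoc_fun N t"
proof (rule assoc_fun_le[OF t])
  fix p
  have "ln (t ^ p / L p) \<le> ln (t ^ p / N p)"
    using pos[of p] le[of p] t by (simp add: frac_le)
  also have "\<dots> \<le> assoc_fun N t" using t by (rule ln_power_div_le_assoc_fun)
  finally show "ln (t ^ p / L p) \<le> assoc_fun N t" .
qed

lemma assoc_fun_add_ln_le_of_shift:
  assumes L_pos: "\<And>p. L p > 0" and shift: "\<And>p. N (p + n) \<le> A ^ (p + n) * L p"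
    and A: "A > 0" and t: "t > 0"
  shows "assoc_fun L t + real n * ln t \<le> assoc_fun N (A * t)"
proof -
  have "ln (t ^ p / L p) \<le> assoc_fun N (A * t) - real n * ln t" for p
  proof -
    have "t ^ (p + n) / L p \<le> (A * t) ^ (p + n) / N (p + n)"
      using shift[of p] L_pos[of p] pos[of "p + n"] A t
      by (simp add: divide_simps power_mult_distrib mult.commute mult.left_commute)
    then have "ln (t ^ (p + n) / L p) \<le> ln ((A * t) ^ (p + n) / N (p + n))"
      using L_pos[of p] pos[of "p + n"] A t by simp
    also have "\<dots> \<le> assoc_fun N (A * t)" using A t by (intro ln_power_div_le_assoc_fun) simp
    finally show ?thesis
      using L_pos[of p] t by (simp add: ln_div ln_mult ln_realpow power_add algebra_simps)
  qed
  with t have "assoc_fun L t \<le> assoc_fun N (A * t) - real n * ln t" by (rule assoc_fun_le)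
  then show ?thesis by simp
qed

lemma shift_le_of_assoc_fun_add_ln_le:
  assumes log_convex: "\<And>p. p \<ge> 1 \<Longrightarrow> (N p)\<^sup>2 \<le> N (p - 1) * N (p + 1)"
    and L: "weight_sequence L" and H: "H > 0"
    and bound: "\<And>s. s > 0 \<Longrightarrow> assoc_fun L s + ln s \<le> assoc_fun N (H * s) + C"
  shows "N (p + 1) \<le> exp C * H ^ (p + 1) * L p"
proof -
  define t where "t = quot_seq N (p + 1)"
  define s where "s = t / H"
  have t: "t > 0" using pos by (simp add: t_def quot_seq_def)
  have s: "s > 0" and t_eq: "t = H * s" using t H by (simp_all add: s_def)
  have L_pos: "L p > 0" using weight_sequence.pos[OF L] .
  txt \<open>By log-convexity the supremum defining assoc_fun N t is attained at the index p + 1.\<close>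
  have "assoc_fun N t \<le> ln (t ^ (p + 1) / N (p + 1))"
  proof (rule assoc_fun_le[OF t])
    fix k
    have "t ^ k / N k \<le> t ^ (p + 1) / N (p + 1)"
      unfolding t_def using pos log_convex by (intro power_div_le_at_quot_seq) auto
    then show "ln (t ^ k / N k) \<le> ln (t ^ (p + 1) / N (p + 1))"
      using t pos[of k] pos[of "p + 1"] by simp
  qed
  moreover have "ln (s ^ p / L p) \<le> assoc_fun L s"
    using s by (rule weight_sequence.ln_power_div_le_assoc_fun[OF L])
  moreover note bound[OF s]
  ultimately have "ln (s ^ p / L p) + ln s - C \<le> ln (t ^ (p + 1) / N (p + 1))"
    unfolding t_eq by linarith
  also have "ln (s ^ p / L p) + ln s - C = ln (s ^ (p + 1) / (exp C * L p))"
    using s L_pos by (simp add: ln_div ln_mult)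
  finally have "s ^ (p + 1) / (exp C * L p) \<le> (H * s) ^ (p + 1) / N (p + 1)"
    using s t L_pos pos[of "p + 1"] unfolding t_eq by simp
  then have "N (p + 1) * s ^ (p + 1) \<le> (exp C * H ^ (p + 1) * L p) * s ^ (p + 1)"
    using L_pos pos[of "p + 1"] by (simp add: divide_simps power_mult_distrib algebra_simps)
  then show ?thesis using s by simp
qed

end

section \<open>Weight matrices\<close>

definition derivation_closed_beurling :: "(real \<Rightarrow> nat \<Rightarrow> real) \<Rightarrow> bool" where
  "derivation_closed_beurling M \<longleftrightarrow> (\<forall>la::real. la > 0 \<longrightarrow> (\<exists>ka A. 0 < ka \<and> ka < la \<and> A \<ge> 1 \<and>
     (\<forall>p::nat. p \<ge> 1 \<longrightarrow> M ka (p + 1) \<le> A ^ (p + 1) * M la p)))"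

definition sqrt_omega_summable :: "(real \<Rightarrow> nat \<Rightarrow> real) \<Rightarrow> bool" where
  "sqrt_omega_summable M \<longleftrightarrow> (\<forall>j::nat. j \<ge> 1 \<longrightarrow> (\<exists>l::nat. l > j \<and>
     summable (\<lambda>k::nat. exp (assoc_fun (M (1 / real j)) (real j * sqrt (real (k + 1)))
                            - assoc_fun (M (1 / real l)) (real l * sqrt (real (k + 1)))))))"

lemma weight_matrix_weight_sequence:
  assumes "weight_matrix M" and "la > 0"
    and "filterlim (\<lambda>p. M la p powr (1 / real p)) at_top sequentially"
  shows "weight_sequence (M la)"
  using assms by unfold_locales (auto simp: weight_matrix_def)

lemma derivation_closed_beurlingD:
  assumes wm: "weight_matrix M" and dc: "derivation_closed_beurling M" and la: "la > 0"
  shows "\<exists>ka A. 0 < ka \<and> ka < la \<and> A \<ge> 1 \<and> (\<forall>p. M ka (p + 1) \<le> A ^ (p + 1) * M la p)"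
proof -
  obtain ka A where ka: "0 < ka" "ka < la" "A \<ge> 1"
    and shift: "\<And>p. p \<ge> 1 \<Longrightarrow> M ka (p + 1) \<le> A ^ (p + 1) * M la p"
    using dc la unfolding derivation_closed_beurling_def by blast
  txt \<open>The index p = 0 is covered by enlarging A to M ka 1, since M la 0 = 1.\<close>
  define A' where "A' = max A (M ka 1)"
  have "M ka (p + 1) \<le> A' ^ (p + 1) * M la p" for p
  proof (cases "p = 0")
    case True
    then show ?thesis using wm la by (simp add: weight_matrix_def A'_def)
  next
    case False
    then have "M ka (p + 1) \<le> A ^ (p + 1) * M la p" using shift by simp
    also have "\<dots> \<le> A' ^ (p + 1) * M la p"
      using wm la ka by (intro mult_right_mono power_mono) (auto simp: weight_matrix_def A'_def less_imp_le)
    finally show ?thesis .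
  qed
  moreover have "A' \<ge> 1" using ka by (simp add: A'_def)
  ultimately show ?thesis using ka by blast
qed

lemma derivation_closed_beurling_iterate:
  assumes wm: "weight_matrix M" and dc: "derivation_closed_beurling M" and la: "la > 0"
  shows "\<exists>ka A. 0 < ka \<and> A \<ge> 1 \<and> (\<forall>p. M ka (p + n) \<le> A ^ (p + n) * M la p)"
proof (induction n)
  case 0
  show ?case using la by (intro exI[of _ la] exI[of _ 1]) auto
next
  case (Suc n)
  then obtain ka A where ka: "0 < ka" "A \<ge> 1" and shift: "\<And>p. M ka (p + n) \<le> A ^ (p + n) * M la p"
    by blast
  obtain kb B where kb: "0 < kb" "B \<ge> 1" and shift': "\<And>p. M kb (p + 1) \<le> B ^ (p + 1) * M ka p"
    using derivation_closed_beurlingD[OF wm dc ka(1)] by blast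
  have "M kb (p + Suc n) \<le> (B * A) ^ (p + Suc n) * M la p" for p
  proof -
    have "M kb (p + Suc n) \<le> B ^ (p + Suc n) * M ka (p + n)" using shift'[of "p + n"] by simp
    also have "\<dots> \<le> B ^ (p + Suc n) * (A ^ (p + n) * M la p)"
      using shift[of p] kb by (intro mult_left_mono) auto
    also have "\<dots> \<le> B ^ (p + Suc n) * (A ^ (p + Suc n) * M la p)"
      using ka kb wm la by (intro mult_left_mono mult_right_mono power_increasing)
        (auto simp: weight_matrix_def less_imp_le)
    finally show ?thesis by (simp add: power_mult_distrib mult_ac)
  qed
  moreover have "B * A \<ge> 1" using ka kb by (metis mult_mono' mult_1 zero_le_one)
  ultimately show ?case using kb by blast
qed

lemma sqrt_omega_summable_of_derivation_closed:
  assumes wm: "weight_matrix M"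
    and lim: "\<And>la. la > 0 \<Longrightarrow> filterlim (\<lambda>p. M la p powr (1 / real p)) at_top sequentially"
    and dc: "derivation_closed_beurling M"
  shows "sqrt_omega_summable M"
  unfolding sqrt_omega_summable_def
proof (intro allI impI)
  fix j :: nat
  assume j: "j \<ge> 1"
  have ws: "\<And>la. la > 0 \<Longrightarrow> weight_sequence (M la)"
    using weight_matrix_weight_sequence[OF wm _ lim] .
  obtain ka A where ka: "0 < ka" "A \<ge> 1"
    and shift: "\<And>p. M ka (p + 3) \<le> A ^ (p + 3) * M (1 / real j) p"
    using derivation_closed_beurling_iterate[OF wm dc, of "1 / real j" 3] j by auto
  define l where "l = nat \<lceil>max (1 / ka) (A * real j)\<rceil> + j + 1"
  have "1 / ka \<le> real l" "A * real j \<le> real l" "l > j"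
    unfolding l_def by linarith+
  then have l: "1 / real l \<le> ka" "A * real j \<le> real l" "l > j"
    using ka by (simp_all add: field_simps)
  have bound: "exp (assoc_fun (M (1 / real j)) (real j * s) - assoc_fun (M (1 / real l)) (real l * s))
      \<le> s powr (-3)" if s: "s \<ge> 1" for s
  proof -
    have "assoc_fun (M (1 / real j)) (real j * s) + real 3 * ln (real j * s)
        \<le> assoc_fun (M ka) (A * (real j * s))"
      using ka s j wm
      by (intro weight_sequence.assoc_fun_add_ln_le_of_shift[OF ws[OF ka(1)]] shift)
        (auto simp: weight_matrix_def)
    also have "\<dots> \<le> assoc_fun (M ka) (real l * s)"
      using ka l s j by (intro mono_onD[OF weight_sequence.assoc_fun_mono[OF ws]] mult_right_mono)
        (auto simp: mult.assoc[symmetric])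
    also have "\<dots> \<le> assoc_fun (M (1 / real l)) (real l * s)"
      using wm ka l s by (intro weight_sequence.assoc_fun_antimono[OF ws]) (auto simp: weight_matrix_def)
    finally have "assoc_fun (M (1 / real j)) (real j * s) - assoc_fun (M (1 / real l)) (real l * s)
        \<le> - 3 * ln s - 3 * ln (real j)"
      using s j by (simp add: ln_mult)
    then have "assoc_fun (M (1 / real j)) (real j * s) - assoc_fun (M (1 / real l)) (real l * s)
        \<le> - 3 * ln s"
      using ln_ge_zero[of "real j"] j by linarith
    then show ?thesis using s by (simp add: powr_def)
  qed
  have "summable (\<lambda>k. real k powr (-3/2))" by (simp add: summable_real_powr_iff)
  then have "summable (\<lambda>k. real (Suc k) powr (-3/2))" by (subst summable_Suc_iff)
  then have "summable (\<lambda>k. sqrt (real (k + 1)) powr (-3))"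
    by (simp add: powr_half_sqrt[symmetric] powr_powr)
  then have "summable (\<lambda>k. exp (assoc_fun (M (1 / real j)) (real j * sqrt (real (k + 1)))
                              - assoc_fun (M (1 / real l)) (real l * sqrt (real (k + 1)))))"
    by (rule summable_comparison_test'[where N = 0]) (simp add: bound)
  with l show "\<exists>l>j. summable (\<lambda>k. exp (assoc_fun (M (1 / real j)) (real j * sqrt (real (k + 1)))
                              - assoc_fun (M (1 / real l)) (real l * sqrt (real (k + 1)))))"
    by blast
qed

lemma derivation_closed_of_sqrt_omega_summable:
  assumes wm: "weight_matrix M"
    and log_convex: "\<And>la p. la > 0 \<Longrightarrow> p \<ge> 1 \<Longrightarrow> (M la p)\<^sup>2 \<le> M la (p - 1) * M la (p + 1)"
    and lim: "\<And>la. la > 0 \<Longrightarrow> filterlim (\<lambda>p. M la p powr (1 / real p)) at_top sequentially"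
    and summable: "sqrt_omega_summable M"
  shows "derivation_closed_beurling M"
  unfolding derivation_closed_beurling_def
proof (intro allI impI)
  fix la :: real
  assume la: "la > 0"
  have ws: "\<And>la. la > 0 \<Longrightarrow> weight_sequence (M la)"
    using weight_matrix_weight_sequence[OF wm _ lim] .
  define j where "j = nat \<lceil>1 / la\<rceil> + 1"
  have "real j > 1 / la" "j \<ge> 1" unfolding j_def by linarith+
  then have j: "1 / real j < la" "j \<ge> 1" using la by (simp_all add: field_simps)
  obtain l where l: "l > j"
    and sum_l: "summable (\<lambda>k. exp (assoc_fun (M (1 / real j)) (real j * sqrt (real (k + 1)))
                                - assoc_fun (M (1 / real l)) (real l * sqrt (real (k + 1)))))"
    using summable j(2) unfolding sqrt_omega_summable_def by blast
  have ws_j: "weight_sequence (M (1 / real j))" and ws_l: "weight_sequence (M (1 / real l))"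
    using j l by (auto intro: ws)
  define H where "H = 2 * real l / real j"
  have H: "H \<ge> 1" using l j by (simp add: H_def field_simps)
  obtain C1 where "\<forall>s\<ge>real j. assoc_fun (M (1 / real j)) s + 2 * ln s \<le> assoc_fun (M (1 / real l)) (H * s) + C1"
    using log_bound_of_summable_exp_diff[OF weight_sequence.assoc_fun_mono[OF ws_j]
        weight_sequence.assoc_fun_mono[OF ws_l] _ _ sum_l] j l
    unfolding H_def by auto
  then obtain C where C: "\<And>s. s > 0 \<Longrightarrow> assoc_fun (M (1 / real j)) s + ln s \<le> assoc_fun (M (1 / real l)) (H * s) + C"
    using add_ln_bound_on_positives[where g = "assoc_fun (M (1 / real l))" and a = "real j",
        OF weight_sequence.assoc_fun_mono[OF ws_j] weight_sequence.assoc_fun_nonneg[OF ws_l]] j H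
    by force
  define A where "A = max 1 (exp C) * H"
  have A: "A \<ge> 1" unfolding A_def using H mult_mono[of 1 "max 1 (exp C)" 1 H] by simp
  have "M (1 / real l) (p + 1) \<le> A ^ (p + 1) * M la p" for p
  proof -
    have "M (1 / real l) (p + 1) \<le> exp C * H ^ (p + 1) * M (1 / real j) p"
      using ws_j H l log_convex
      by (intro weight_sequence.shift_le_of_assoc_fun_add_ln_le[OF ws_l] C) auto
    also have "\<dots> \<le> A ^ (p + 1) * M (1 / real j) p"
    proof -
      have "exp C \<le> max 1 (exp C) ^ (p + 1)"
        using power_increasing[of 1 "p + 1" "max 1 (exp C)"] by simp
      then have "exp C * H ^ (p + 1) \<le> A ^ (p + 1)"
        unfolding A_def power_mult_distrib using H by (intro mult_right_mono) auto
      then show ?thesis using weight_sequence.pos[OF ws_j, of p] by (intro mult_right_mono) auto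
    qed
    also have "\<dots> \<le> A ^ (p + 1) * M la p"
      using wm j A by (intro mult_left_mono) (auto simp: weight_matrix_def)
    finally show ?thesis .
  qed
  moreover have "1 / real l < 1 / real j" using j l by (intro frac_less2) auto
  then have "1 / real l < la" using j by linarith
  ultimately show "\<exists>ka A. 0 < ka \<and> ka < la \<and> A \<ge> 1 \<and> (\<forall>p\<ge>1. M ka (p + 1) \<le> A ^ (p + 1) * M la p)"
    using A l by (intro exI[of _ "1 / real l"] exI[of _ A]) auto
qed

theorem proposition5p6:
  fixes M :: "real \<Rightarrow> nat \<Rightarrow> real"
  assumes wm: "weight_matrix M"
    and lc: "\<And>la p. la > 0 \<Longrightarrow> p \<ge> 1 \<Longrightarrow> (M la p)\<^sup>2 \<le> M la (p - 1) * M la (p + 1)"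
    and lim: "\<And>la. la > 0 \<Longrightarrow> filterlim (\<lambda>p. M la p powr (1 / real p)) at_top sequentially"
    and mu_mono: "\<And>la ka p. 0 < la \<Longrightarrow> la \<le> ka \<Longrightarrow> quot_seq (M la) p \<le> quot_seq (M ka) p"
  shows "(\<forall>j::nat. j \<ge> 1 \<longrightarrow> (\<exists>l::nat. l > j \<and>
            summable (\<lambda>k::nat. exp (assoc_fun (M (1 / real j)) (real j * sqrt (real (k + 1)))
                                   - assoc_fun (M (1 / real l)) (real l * sqrt (real (k + 1)))))))
     \<longleftrightarrow> (\<forall>la::real. la > 0 \<longrightarrow> (\<exists>ka A. 0 < ka \<and> ka < la \<and> A \<ge> 1 \<and>
            (\<forall>p::nat. p \<ge> 1 \<longrightarrow> M ka (p + 1) \<le> A ^ (p + 1) * M la p)))"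
proof -
  have "sqrt_omega_summable M \<longleftrightarrow> derivation_closed_beurling M"
    using sqrt_omega_summable_of_derivation_closed[OF wm lim]
      derivation_closed_of_sqrt_omega_summable[OF wm lc lim] by blast
  then show ?thesis unfolding sqrt_omega_summable_def derivation_closed_beurling_def .
qed

end
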